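(* Let $\mathbb{F}$ be a field, $n\ge1$, and $d=pq$ with integers $p,q\ge1$. For every $n^{d}\times n^{d}$ matrix $M$, $\mathrm{PT\text{-}rank}_{[n]^{pq}}(M)\le\mathrm{PT\text{-}rank}_{[n^p]^q}(M)$.
   Context: $\mathrm{PT\text{-}rank}_{[n]^{pq}}(M)$ is the PT-rank of $M$ viewed as an $n^{pq}\times n^{pq}$ matrix with rows/columns indexed by $[n]^{pq}$; $\mathrm{PT\text{-}rank}_{[n^p]^q}(M)$ is the PT-rank of the same matrix viewed as an $(n^p)^q\times(n^p)^q$ matrix, where each of the $q$ coordinates in $[n^p]$ encodes a consecutive block of $p$ coordinates in $[n]$ (coordinates $(l-1)p+1,\dots,lp$ for the $l$-th). For a matrix indexed by $[N]^m$: $M^{\top_k}$ ($k\in[m]$) swaps the $k$-th row index with the $k$-th column index, $M^{\top_\kappa}$ composes these over $k\in\kappa\subseteq[m]$, $M$ is PT-basic if $\mathrm{rank}(M^{\top_\kappa})=1$ for some $\kappa$, and the PT-rank is the least number of PT-basic matrices summing to $M$. *)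

theory Defs
  imports Main
begin

text \<open>Index set [N]^m, with [N] = {0..<N} (0-based), multi-indices as lists of length m.\<close>
definition idx :: "nat \<Rightarrow> nat \<Rightarrow> nat list set" where
  "idx N m = {xs. length xs = m \<and> (\<forall>x\<in>set xs. x < N)}"

text \<open>Matrices indexed by [N]^m x [N]^m: functions on multi-indices (only values on idx N m matter).\<close>
type_synonym 'a pmat = "nat list \<Rightarrow> nat list \<Rightarrow> 'a"

definition mix :: "nat set \<Rightarrow> nat list \<Rightarrow> nat list \<Rightarrow> nat list" where
  "mix \<kappa> x y = map (\<lambda>k. if k \<in> \<kappa> then y ! k else x ! k) [0..<length x]"

text \<open>Partial transpose M^{T_kappa}: swap the k-th row index with the k-th column index for k in kappa.\<close>
definition ptrans :: "nat set \<Rightarrow> 'a pmat \<Rightarrow> 'a pmat" where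
  "ptrans \<kappa> M = (\<lambda>x y. M (mix \<kappa> x y) (mix \<kappa> y x))"

definition rank_one_on :: "nat list set \<Rightarrow> ('a::field) pmat \<Rightarrow> bool" where
  "rank_one_on I M \<longleftrightarrow> (\<exists>x\<in>I. \<exists>y\<in>I. M x y \<noteq> 0) \<and>
     (\<exists>u v. \<forall>x\<in>I. \<forall>y\<in>I. M x y = u x * v y)"

definition pt_basic :: "nat \<Rightarrow> nat \<Rightarrow> ('a::field) pmat \<Rightarrow> bool" where
  "pt_basic N m M \<longleftrightarrow> (\<exists>\<kappa> \<subseteq> {0..<m}. rank_one_on (idx N m) (ptrans \<kappa> M))"

definition pt_rank :: "nat \<Rightarrow> nat \<Rightarrow> ('a::field) pmat \<Rightarrow> nat" where
  "pt_rank N m M = (LEAST r. \<exists>B. (\<forall>i<r. pt_basic N m (B i)) \<and>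
      (\<forall>x\<in>idx N m. \<forall>y\<in>idx N m. M x y = (\<Sum>i<r. B i x y)))"

text \<open>Decode a multi-index in [n^p]^q into one in [n]^{pq}: the l-th coordinate a in [n^p]
  is expanded (base-n digits, least significant first) into the coordinates lp,...,lp+p-1.\<close>
definition ungroup :: "nat \<Rightarrow> nat \<Rightarrow> nat list \<Rightarrow> nat list" where
  "ungroup n p X = concat (map (\<lambda>a. map (\<lambda>j. a div n ^ j mod n) [0..<p]) X)"

text \<open>The same matrix M on [n]^{pq} viewed as a matrix on [n^p]^q.\<close>
definition regroup :: "nat \<Rightarrow> nat \<Rightarrow> 'a pmat \<Rightarrow> 'a pmat" where
  "regroup n p M = (\<lambda>X Y. M (ungroup n p X) (ungroup n p Y))"

end

theory Submission
  imports Defs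
begin

text \<open>Expanding each coordinate in [n^p] into its p base-n digits is a bijection from [n^p]^q
  onto [n]^{pq}, and it turns the partial transpose over a set \<kappa> of coarse coordinates into
  the partial transpose over the union of the corresponding blocks of fine coordinates. Hence
  a PT-basic matrix for the coarse indexing is PT-basic for the fine one, and every coarse
  PT-decomposition of M is a fine one of the same length.\<close>

definition pt_decomp :: "nat \<Rightarrow> nat \<Rightarrow> nat \<Rightarrow> ('a::field) pmat \<Rightarrow> bool" where
  "pt_decomp N m r M \<longleftrightarrow> (\<exists>B. (\<forall>i<r. pt_basic N m (B i)) \<and>
      (\<forall>x\<in>idx N m. \<forall>y\<in>idx N m. M x y = (\<Sum>i<r. B i x y)))"

lemma pt_rank_eq_Least_pt_decomp: "pt_rank N m M = (LEAST r. pt_decomp N m r M)"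
  by (simp add: pt_rank_def pt_decomp_def)

lemma finite_idx: "finite (idx N m)"
proof -
  have "idx N m = {xs. set xs \<subseteq> {0..<N} \<and> length xs = m}"
    by (auto simp: idx_def)
  then show ?thesis
    using finite_lists_length_eq[of "{0..<N}" m] by simp
qed

lemma idx_nth_less: "x \<in> idx N m \<Longrightarrow> k < m \<Longrightarrow> x ! k < N"
  by (auto simp: idx_def)

lemma length_mix [simp]: "length (mix \<kappa> x y) = length x"
  by (simp add: mix_def)

lemma nth_mix [simp]: "k < length x \<Longrightarrow> mix \<kappa> x y ! k = (if k \<in> \<kappa> then y ! k else x ! k)"
  by (simp add: mix_def)

lemma mix_empty [simp]: "mix {} x y = x"
  by (rule nth_equalityI) auto

lemma ptrans_empty [simp]: "ptrans {} M = M"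
  by (simp add: ptrans_def)

lemma mix_in_idx: "x \<in> idx N m \<Longrightarrow> y \<in> idx N m \<Longrightarrow> mix \<kappa> x y \<in> idx N m"
  by (simp add: idx_def all_set_conv_all_nth)

lemma rank_one_on_cong:
  "\<forall>x\<in>I. \<forall>y\<in>I. A x y = A' x y \<Longrightarrow> rank_one_on I A = rank_one_on I A'"
  by (simp add: rank_one_on_def)

lemma rank_one_on_pullback:
  assumes "g ` J = I" "rank_one_on I A"
  shows "rank_one_on J (\<lambda>x y. A (g x) (g y))"
proof -
  obtain a b u v where ab: "a \<in> I" "b \<in> I" "A a b \<noteq> 0"
    and uv: "\<forall>x\<in>I. \<forall>y\<in>I. A x y = u x * v y"
    using assms(2) unfolding rank_one_on_def by blast
  obtain x y where xy: "x \<in> J" "y \<in> J" "a = g x" "b = g y"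
    using ab(1,2) assms(1) by blast
  show ?thesis
    unfolding rank_one_on_def
  proof (intro conjI)
    show "\<exists>x\<in>J. \<exists>y\<in>J. A (g x) (g y) \<noteq> 0"
      using xy ab(3) by blast
    show "\<exists>u' v'. \<forall>x\<in>J. \<forall>y\<in>J. A (g x) (g y) = u' x * v' y"
    proof (rule exI, rule exI)
      show "\<forall>x\<in>J. \<forall>y\<in>J. A (g x) (g y) = u (g x) * v (g y)"
        using uv assms(1) by blast
    qed
  qed
qed

subsection \<open>PT-decompositions\<close>

lemma pt_basic_single_entry:
  fixes c :: "'a::field"
  assumes "a \<in> idx N m" "b \<in> idx N m" "c \<noteq> 0"
  shows "pt_basic N m (\<lambda>x y. if x = a \<and> y = b then c else 0)"
proof -
  have "rank_one_on (idx N m) (\<lambda>x y. if x = a \<and> y = b then c else 0)"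
    unfolding rank_one_on_def
  proof (intro conjI exI)
    show "\<exists>x\<in>idx N m. \<exists>y\<in>idx N m. (if x = a \<and> y = b then c else 0) \<noteq> 0"
      using assms by auto
    show "\<forall>x\<in>idx N m. \<forall>y\<in>idx N m. (if x = a \<and> y = b then c else 0) =
        (if x = a then c else 0) * (if y = b then 1 else 0)"
      by simp
  qed
  then show ?thesis
    unfolding pt_basic_def by (intro exI[of _ "{}"]) simp
qed

lemma pt_decomp_add_pt_basic:
  assumes "pt_decomp N m r M" "pt_basic N m E"
  shows "pt_decomp N m (Suc r) (\<lambda>x y. M x y + E x y)"
proof -
  obtain B where B: "\<forall>i<r. pt_basic N m (B i)"
    "\<forall>x\<in>idx N m. \<forall>y\<in>idx N m. M x y = (\<Sum>i<r. B i x y)"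
    using assms(1) unfolding pt_decomp_def by blast
  have "(\<Sum>i<Suc r. (B(r := E)) i x y) = (\<Sum>i<r. B i x y) + E x y" for x y
    by simp
  then show ?thesis
    unfolding pt_decomp_def using B assms(2)
    by (intro exI[of _ "B(r := E)"]) auto
qed

lemma pt_decomp_cong:
  "\<forall>x\<in>idx N m. \<forall>y\<in>idx N m. M x y = M' x y \<Longrightarrow> pt_decomp N m r M = pt_decomp N m r M'"
  by (simp add: pt_decomp_def)

text \<open>This makes the LEAST in pt_rank attained: M is the sum of its single-entry
  matrices, which are PT-basic with \<kappa> = {}.\<close>
lemma pt_decomp_exists: "\<exists>r. pt_decomp N m r M"
proof -
  let ?M = "\<lambda>S x y. if (x, y) \<in> S then M x y else 0"
  have "\<exists>r. pt_decomp N m r (?M S)" if "finite S" for S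
    using that
  proof (induction S rule: finite_induct)
    case empty
    have "pt_decomp N m 0 (\<lambda>x y. 0)"
      by (simp add: pt_decomp_def)
    then show ?case by auto
  next
    case (insert ab S)
    obtain a b where ab: "ab = (a, b)"
      by fastforce
    obtain r where r: "pt_decomp N m r (?M S)"
      using insert.IH by blast
    show ?case
    proof (cases "a \<in> idx N m \<and> b \<in> idx N m \<and> M a b \<noteq> 0")
      case True
      have "pt_decomp N m (Suc r)
          (\<lambda>x y. ?M S x y + (if x = a \<and> y = b then M a b else 0))"
        using True by (intro pt_decomp_add_pt_basic[OF r] pt_basic_single_entry) auto
      moreover have "?M S x y + (if x = a \<and> y = b then M a b else 0) = ?M (insert ab S) x y"
        for x y
        using insert.hyps(2) ab by auto
      ultimately show ?thesis
        by auto
    next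
      case False
      then have "\<forall>x\<in>idx N m. \<forall>y\<in>idx N m. ?M S x y = ?M (insert ab S) x y"
        using ab by auto
      then show ?thesis
        using r pt_decomp_cong[of N m "?M S" "?M (insert ab S)" r] by blast
    qed
  qed
  from this[of "idx N m \<times> idx N m"] show ?thesis
    using finite_idx pt_decomp_cong[of N m "?M (idx N m \<times> idx N m)" M] by auto
qed

lemma pt_decomp_pullback:
  fixes M M' :: "('a::field) pmat"
  assumes "pt_decomp N' m' r M'"
    and "g ` idx N m \<subseteq> idx N' m'"
    and "\<And>B :: 'a pmat. pt_basic N' m' B \<Longrightarrow> pt_basic N m (\<lambda>x y. B (g x) (g y))"
    and "\<forall>x\<in>idx N m. \<forall>y\<in>idx N m. M x y = M' (g x) (g y)"
  shows "pt_decomp N m r M"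
proof -
  obtain B where B: "\<forall>i<r. pt_basic N' m' (B i)"
    "\<forall>x\<in>idx N' m'. \<forall>y\<in>idx N' m'. M' x y = (\<Sum>i<r. B i x y)"
    using assms(1) unfolding pt_decomp_def by blast
  have "\<forall>i<r. pt_basic N m (\<lambda>x y. B i (g x) (g y))"
    using B(1) assms(3)[of "B _"] by blast
  moreover have "\<forall>x\<in>idx N m. \<forall>y\<in>idx N m. M x y = (\<Sum>i<r. B i (g x) (g y))"
    using B(2) assms(2,4) by (simp add: image_subset_iff)
  ultimately show ?thesis
    unfolding pt_decomp_def by (intro exI[of _ "\<lambda>i x y. B i (g x) (g y)"]) simp
qed

lemma pt_rank_le_pullback:
  fixes M M' :: "('a::field) pmat"
  assumes "g ` idx N m \<subseteq> idx N' m'"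
    and "\<And>B :: 'a pmat. pt_basic N' m' B \<Longrightarrow> pt_basic N m (\<lambda>x y. B (g x) (g y))"
    and "\<forall>x\<in>idx N m. \<forall>y\<in>idx N m. M x y = M' (g x) (g y)"
  shows "pt_rank N m M \<le> pt_rank N' m' M'"
proof -
  have "pt_decomp N' m' (pt_rank N' m' M') M'"
    unfolding pt_rank_eq_Least_pt_decomp by (rule LeastI_ex[OF pt_decomp_exists])
  then have "pt_decomp N m (pt_rank N' m' M') M"
    using assms by (rule pt_decomp_pullback)
  then show ?thesis
    unfolding pt_rank_eq_Least_pt_decomp[of N m] by (rule Least_le)
qed

subsection \<open>Base-n digits\<close>

definition from_digits :: "nat \<Rightarrow> nat \<Rightarrow> (nat \<Rightarrow> nat) \<Rightarrow> nat" where
  "from_digits n p d = (\<Sum>j<p. d j * n ^ j)"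

lemma from_digits_Suc: "from_digits n (Suc p) d = d 0 + n * from_digits n p (\<lambda>j. d (Suc j))"
  unfolding from_digits_def sum.lessThan_Suc_shift
  by (simp add: sum_distrib_left mult.assoc mult.left_commute)

lemma from_digits_less:
  assumes "\<forall>j<p. d j < n"
  shows "from_digits n p d < n ^ p"
  using assms
proof (induction p arbitrary: d)
  case 0
  then show ?case by (simp add: from_digits_def)
next
  case (Suc p)
  have "from_digits n p (\<lambda>j. d (Suc j)) < n ^ p"
    using Suc by auto
  then have "n * (from_digits n p (\<lambda>j. d (Suc j)) + 1) \<le> n * n ^ p"
    by (intro mult_le_mono2) simp
  moreover have "d 0 < n"
    using Suc.prems by blast
  ultimately show ?case
    by (simp add: from_digits_Suc)
qed

lemma digit_from_digits:
  assumes "\<forall>j<p. d j < n" "i < p"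
  shows "from_digits n p d div n ^ i mod n = d i"
  using assms
proof (induction p arbitrary: d i)
  case 0
  then show ?case by simp
next
  case (Suc p)
  show ?case
  proof (cases i)
    case 0
    then show ?thesis
      using Suc.prems by (simp add: from_digits_Suc)
  next
    case (Suc i')
    have "n > 0"
      using Suc.prems by auto
    then have "from_digits n (Suc p) d div n ^ i = from_digits n p (\<lambda>j. d (Suc j)) div n ^ i'"
      using Suc.prems \<open>i = Suc i'\<close> by (simp add: from_digits_Suc div_mult2_eq)
    then show ?thesis
      using Suc.IH[of "\<lambda>j. d (Suc j)" i'] Suc.prems \<open>i = Suc i'\<close> by auto
  qed
qed

lemma from_digits_digits:
  assumes "a < n ^ p"
  shows "from_digits n p (\<lambda>j. a div n ^ j mod n) = a"
  using assms
proof (induction p arbitrary: a)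
  case 0
  then show ?case by (simp add: from_digits_def)
next
  case (Suc p)
  have "n > 0"
    using Suc.prems by (cases "n = 0") auto
  then have "a div n < n ^ p"
    using Suc.prems by (simp add: div_less_iff_less_mult mult.commute)
  then have "from_digits n p (\<lambda>j. a div n div n ^ j mod n) = a div n"
    using Suc.IH by blast
  then show ?case
    by (simp add: from_digits_Suc div_mult2_eq)
qed

subsection \<open>Grouping coordinates into blocks\<close>

definition group_blocks :: "nat \<Rightarrow> nat \<Rightarrow> nat list \<Rightarrow> nat list" where
  "group_blocks n p x = map (\<lambda>l. from_digits n p (\<lambda>j. x ! (l * p + j))) [0..<length x div p]"

lemma length_ungroup [simp]: "length (ungroup n p X) = length X * p"
  by (induction X) (auto simp: ungroup_def)

lemma nth_ungroup:
  "k < length X * p \<Longrightarrow> ungroup n p X ! k = X ! (k div p) div n ^ (k mod p) mod n"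
proof (induction X arbitrary: k)
  case Nil
  then show ?case by simp
next
  case (Cons a X)
  have split: "ungroup n p (a # X) = map (\<lambda>j. a div n ^ j mod n) [0..<p] @ ungroup n p X"
    by (simp add: ungroup_def)
  show ?case
  proof (cases "k < p")
    case True
    then show ?thesis
      unfolding split by (simp add: nth_append)
  next
    case False
    moreover have "p > 0"
      using Cons.prems by (cases p) auto
    ultimately have "k div p = Suc ((k - p) div p)" "k mod p = (k - p) mod p"
      by (simp_all add: le_div_geq le_mod_geq)
    moreover have "k - p < length X * p"
      using Cons.prems False by auto
    ultimately show ?thesis
      unfolding split using False Cons.IH[of "k - p"] by (simp add: nth_append)
  qed
qed

lemma block_index_less: "(l::nat) < q \<Longrightarrow> j < p \<Longrightarrow> l * p + j < p * q"
proof -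
  assume "l < q" "j < p"
  then have "l * p + j < (l + 1) * p" by simp
  also have "\<dots> \<le> q * p"
    using \<open>l < q\<close> by (intro mult_le_mono1) simp
  finally show ?thesis by (simp add: mult.commute)
qed

lemma ungroup_in_idx:
  assumes "n > 0" "X \<in> idx (n ^ p) q"
  shows "ungroup n p X \<in> idx n (p * q)"
proof -
  have "length X = q"
    using assms(2) by (simp add: idx_def)
  then show ?thesis
    using nth_ungroup[of _ X p n] assms(1)
    by (auto simp: idx_def in_set_conv_nth mult.commute)
qed

lemma group_blocks_in_idx:
  assumes "p > 0" "x \<in> idx n (p * q)"
  shows "group_blocks n p x \<in> idx (n ^ p) q"
proof -
  have "from_digits n p (\<lambda>j. x ! (l * p + j)) < n ^ p" if "l < q" for l
    using idx_nth_less[OF assms(2) block_index_less[OF that]] by (blast intro: from_digits_less)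
  moreover have "length x = p * q"
    using assms(2) by (simp add: idx_def)
  ultimately show ?thesis
    using assms(1) by (auto simp: idx_def group_blocks_def)
qed

lemma ungroup_group_blocks:
  assumes "p > 0" "x \<in> idx n (p * q)"
  shows "ungroup n p (group_blocks n p x) = x"
proof (rule nth_equalityI)
  have len: "length x = p * q"
    using assms(2) by (simp add: idx_def)
  then show "length (ungroup n p (group_blocks n p x)) = length x"
    by (simp add: group_blocks_def)
  fix k
  assume "k < length (ungroup n p (group_blocks n p x))"
  then have k: "k < q * p"
    using len assms(1) by (simp add: group_blocks_def)
  then have kq: "k div p < q"
    by (simp add: div_less_iff_less_mult assms(1))
  have "ungroup n p (group_blocks n p x) ! k
      = from_digits n p (\<lambda>j. x ! (k div p * p + j)) div n ^ (k mod p) mod n"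
    using nth_ungroup[of k] k kq len assms(1) by (simp add: group_blocks_def)
  also have "\<dots> = x ! (k div p * p + k mod p)"
    using idx_nth_less[OF assms(2) block_index_less[OF kq]] assms(1)
    by (intro digit_from_digits) auto
  finally show "ungroup n p (group_blocks n p x) ! k = x ! k"
    by simp
qed

lemma group_blocks_ungroup:
  assumes "p > 0" "X \<in> idx (n ^ p) q"
  shows "group_blocks n p (ungroup n p X) = X"
proof (rule nth_equalityI)
  have len: "length X = q"
    using assms(2) by (simp add: idx_def)
  then show "length (group_blocks n p (ungroup n p X)) = length X"
    using assms(1) by (simp add: group_blocks_def)
  fix l
  assume "l < length (group_blocks n p (ungroup n p X))"
  then have l: "l < q"
    using len assms(1) by (simp add: group_blocks_def)
  have "ungroup n p X ! (l * p + j) = X ! l div n ^ j mod n" if "j < p" for j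
    using nth_ungroup[of "l * p + j" X p n] block_index_less[OF l that] len that
    by (simp add: mult.commute)
  then have "group_blocks n p (ungroup n p X) ! l = from_digits n p (\<lambda>j. X ! l div n ^ j mod n)"
    using l len assms(1) by (simp add: group_blocks_def from_digits_def)
  also have "\<dots> = X ! l"
    using from_digits_digits idx_nth_less[OF assms(2) l] by blast
  finally show "group_blocks n p (ungroup n p X) ! l = X ! l" .
qed

lemma group_blocks_image:
  assumes "n > 0" "p > 0"
  shows "group_blocks n p ` idx n (p * q) = idx (n ^ p) q"
proof
  show "group_blocks n p ` idx n (p * q) \<subseteq> idx (n ^ p) q"
    using group_blocks_in_idx[OF assms(2)] by blast
  show "idx (n ^ p) q \<subseteq> group_blocks n p ` idx n (p * q)"
    using group_blocks_ungroup[OF assms(2)] ungroup_in_idx[OF assms(1)] by (metis image_eqI subsetI)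
qed

lemma ungroup_mix:
  assumes "length X = length Y"
  shows "ungroup n p (mix \<kappa> X Y) = mix {k. k div p \<in> \<kappa>} (ungroup n p X) (ungroup n p Y)"
proof (rule nth_equalityI)
  fix k
  assume "k < length (ungroup n p (mix \<kappa> X Y))"
  then have "k < length X * p" "k div p < length X"
    by (auto simp: less_mult_imp_div_less)
  then show "ungroup n p (mix \<kappa> X Y) ! k = mix {k. k div p \<in> \<kappa>} (ungroup n p X) (ungroup n p Y) ! k"
    using assms by (simp add: nth_ungroup)
qed simp

lemma group_blocks_mix:
  assumes "n > 0" "p > 0" "x \<in> idx n (p * q)" "y \<in> idx n (p * q)"
  shows "group_blocks n p (mix {k. k div p \<in> \<kappa>} x y) = mix \<kappa> (group_blocks n p x) (group_blocks n p y)"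
proof -
  let ?X = "group_blocks n p x" and ?Y = "group_blocks n p y"
  have XY: "?X \<in> idx (n ^ p) q" "?Y \<in> idx (n ^ p) q"
    using group_blocks_in_idx[OF assms(2)] assms(3,4) by blast+
  moreover have "ungroup n p ?X = x" "ungroup n p ?Y = y"
    using ungroup_group_blocks[OF assms(2)] assms(3,4) by blast+
  ultimately have "mix {k. k div p \<in> \<kappa>} x y = ungroup n p (mix \<kappa> ?X ?Y)"
    using ungroup_mix[of ?X ?Y n p \<kappa>] by (simp add: idx_def)
  then show ?thesis
    using group_blocks_ungroup[OF assms(2) mix_in_idx[OF XY]] by simp
qed

lemma pt_basic_pullback_group_blocks:
  assumes "n > 0" "p > 0" "pt_basic (n ^ p) q B"
  shows "pt_basic n (p * q) (\<lambda>x y. B (group_blocks n p x) (group_blocks n p y))"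
proof -
  obtain \<kappa> where \<kappa>: "\<kappa> \<subseteq> {0..<q}" "rank_one_on (idx (n ^ p) q) (ptrans \<kappa> B)"
    using assms(3) unfolding pt_basic_def by blast
  let ?\<kappa>' = "{k. k div p \<in> \<kappa>}"
  have "?\<kappa>' \<subseteq> {0..<p * q}"
    using \<kappa>(1) assms(2) by (auto simp: div_less_iff_less_mult mult.commute)
  moreover have "rank_one_on (idx n (p * q))
      (ptrans ?\<kappa>' (\<lambda>x y. B (group_blocks n p x) (group_blocks n p y)))"
    using rank_one_on_pullback[OF group_blocks_image[OF assms(1,2)] \<kappa>(2)]
      group_blocks_mix[OF assms(1,2)]
    by (subst rank_one_on_cong) (auto simp: ptrans_def)
  ultimately show ?thesis
    unfolding pt_basic_def by blast
qed

theorem lemma3p11: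
  fixes M :: "('a::field) pmat" and n p q :: nat
  assumes "n \<ge> 1" and "p \<ge> 1" and "q \<ge> 1"
  shows "pt_rank n (p * q) M \<le> pt_rank (n ^ p) q (regroup n p M)"
proof (rule pt_rank_le_pullback)
  have n: "n > 0" and p: "p > 0"
    using assms by auto
  show "group_blocks n p ` idx n (p * q) \<subseteq> idx (n ^ p) q"
    using group_blocks_image[OF n p] by simp
  show "pt_basic n (p * q) (\<lambda>x y. B (group_blocks n p x) (group_blocks n p y))"
    if "pt_basic (n ^ p) q B" for B :: "'a pmat"
    using pt_basic_pullback_group_blocks[OF n p that] .
  show "\<forall>x\<in>idx n (p * q). \<forall>y\<in>idx n (p * q).
      M x y = regroup n p M (group_blocks n p x) (group_blocks n p y)"
    using ungroup_group_blocks[OF p] by (simp add: regroup_def)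
qed

end
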